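(* Fix a state $x^\circ\in\mathsf{X}$ and let $\tau_{x^\circ}=\min\{t\ge1: X(t)=x^\circ\}$. Suppose the relative value function $h^*$ admits the stochastic shortest path (SSP) representation \[ h^*(x)=\min_{U}\mathsf{E}_x\Bigl[\sum_{t=0}^{\tau_{x^\circ}-1}\bigl(c(X(t),U(t))-\eta^*\bigr)\Bigr], \] with the minimum attained by an optimal stationary policy $\phi^*$ that is $(c,h^* )$-myopic. Let $h\colon\mathsf{X}\to\mathbb{R}$, let $\eta\in\mathbb{R}_+$, let $\mathcal{E}_B$ be the Bellman error of $h$ and $c^h(x,u)=c(x,u)-\mathcal{E}_B(x)+\eta$ the perturbed cost, and suppose $h$ admits the SSP representation \[ h(x)=\min_{U}\mathsf{E}_x\Bigl[\sum_{t=0}^{\tau_{x^\circ}-1}\bigl(c^h(X(t),U(t))-\eta\bigr)\Bigr], \] where the minimizing policy is the $(c^h,h)$-myopic policy $\phi^h$ (equivalently the $(c,h)$-myopic policy). Then the direct error $\mathcal{E}_d(x)=h^*(x)-h(x)$ satisfies, for each $x\in\mathsf{X}$, \[ \mathsf{E}^{\phi^*}_x\Bigl[\sum_{t=0}^{\tau_{x^\circ}-1}\bigl(\mathcal{E}_B(X(t))-\eta^*\bigr)\Bigr]\le \mathcal{E}_d(x)\le \mathsf{E}^{\phi^h}_x\Bigl[\sum_{t=0}^{\tau_{x^\circ}-1}\bigl(\mathcal{E}_B(X(t))-\eta^*\bigr)\Bigr], \] where $\mathsf{E}^\phi_x$ denotes expectation for the controlled chain started at $x$ under the stationary policy $\p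hi$.
   Context: MDP model: state space $\mathsf{X}\subseteq\mathbb{R}^\ell$, action space $\mathsf{U}\subseteq\mathbb{R}^{\ell_u}$, feasible action sets $\mathsf{U}(x)$, i.i.d. disturbance $W$ on $\mathbb{R}^w$, dynamics $X(t+1)=X(t)+f(X(t),U(t),W(t+1))$. Generator $\mathcal{D}_u h(x)=\mathsf{E}[h(x+f(x,u,W(1)))]-h(x)$. Cost $c\colon\mathsf{X}\times\mathsf{U}\to\mathbb{R}_+$. The average cost of an input sequence $U$ from $x$ is $\limsup_{n\to\infty}\frac1n\sum_{t=0}^{n-1}\mathsf{E}_x[c(X(t),U(t))]$; $\eta^*$ denotes its infimum over all input sequences, assumed independent of $x$. The relative value function $h^*$ and $\eta^*$ satisfy the average cost optimality equation $\min_{u\in\mathsf{U}(x)}(c(x,u)+\mathcal{D}_u h^*(x))=\eta^*$. For a function $g$, a $(c,g)$-myopic policy is any $\phi^g(x)\in\arg\min_{u\in\mathsf{U}(x)}(c(x,u)+\mathcal{D}_u g(x))$. For a function $h$, its Bellman error is $\mathcal{E}_B(x)=\min_{u\in\mathsf{U}(x)}(c(x,u)+\mathcal{D}_u h(x))$. *)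

theory Defs
  imports "HOL-Probability.Probability"
begin

text \<open>Probability space of the i.i.d. disturbance sequence: \<open>\<omega> t\<close> plays the role of \<open>W(t+1)\<close>.\<close>
definition noise_space :: "'w measure \<Rightarrow> (nat \<Rightarrow> 'w) measure" where
  "noise_space \<mu> = PiM UNIV (\<lambda>_::nat. \<mu>)"

primrec traj :: "('x::plus \<Rightarrow> 'u \<Rightarrow> 'w \<Rightarrow> 'x) \<Rightarrow> 'x \<Rightarrow> (nat \<Rightarrow> (nat \<Rightarrow> 'w) \<Rightarrow> 'u)
    \<Rightarrow> nat \<Rightarrow> (nat \<Rightarrow> 'w) \<Rightarrow> 'x" where
  "traj f x U 0 \<omega> = x"
| "traj f x U (Suc t) \<omega> = traj f x U t \<omega> + f (traj f x U t \<omega>) (U t \<omega>) (\<omega> t)"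

primrec straj :: "('x::plus \<Rightarrow> 'u \<Rightarrow> 'w \<Rightarrow> 'x) \<Rightarrow> 'x \<Rightarrow> ('x \<Rightarrow> 'u)
    \<Rightarrow> nat \<Rightarrow> (nat \<Rightarrow> 'w) \<Rightarrow> 'x" where
  "straj f x \<phi> 0 \<omega> = x"
| "straj f x \<phi> (Suc t) \<omega> = straj f x \<phi> t \<omega> + f (straj f x \<phi> t \<omega>) (\<phi> (straj f x \<phi> t \<omega>)) (\<omega> t)"

definition stat_input :: "('x::plus \<Rightarrow> 'u \<Rightarrow> 'w \<Rightarrow> 'x) \<Rightarrow> 'x \<Rightarrow> ('x \<Rightarrow> 'u)
    \<Rightarrow> nat \<Rightarrow> (nat \<Rightarrow> 'w) \<Rightarrow> 'u" where
  "stat_input f x \<phi> t \<omega> = \<phi> (straj f x \<phi> t \<omega>)"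

text \<open>Admissible (non-anticipative, measurable, feasible) input sequences from initial state \<open>x\<close>:
  \<open>U(t)\<close> depends only on \<open>W(1),\<dots>,W(t)\<close>, i.e. on \<open>\<omega> 0, \<dots>, \<omega> (t-1)\<close>.\<close>
definition admissible :: "('x::plus \<Rightarrow> 'u::topological_space \<Rightarrow> 'w \<Rightarrow> 'x) \<Rightarrow> 'w measure
    \<Rightarrow> ('x \<Rightarrow> 'u set) \<Rightarrow> 'x \<Rightarrow> (nat \<Rightarrow> (nat \<Rightarrow> 'w) \<Rightarrow> 'u) \<Rightarrow> bool" where
  "admissible f \<mu> Uf x U \<longleftrightarrow>
     (\<forall>t. U t \<in> borel_measurable (noise_space \<mu>)) \<and>
     (\<forall>t \<omega> \<omega>'. (\<forall>i<t. \<omega> i = \<omega>' i) \<longrightarrow> U t \<omega> = U t \<omega>') \<and>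
     (AE \<omega> in noise_space \<mu>. \<forall>t. U t \<omega> \<in> Uf (traj f x U t \<omega>))"

definition gen :: "('x::plus \<Rightarrow> 'u \<Rightarrow> 'w \<Rightarrow> 'x) \<Rightarrow> 'w measure \<Rightarrow> 'u \<Rightarrow> ('x \<Rightarrow> real) \<Rightarrow> 'x \<Rightarrow> real" where
  "gen f \<mu> u h x = (\<integral>w. h (x + f x u w) \<partial>\<mu>) - h x"

definition bellman_error :: "('x::plus \<Rightarrow> 'u \<Rightarrow> 'w \<Rightarrow> 'x) \<Rightarrow> 'w measure \<Rightarrow> ('x \<Rightarrow> 'u set)
    \<Rightarrow> ('x \<Rightarrow> 'u \<Rightarrow> real) \<Rightarrow> ('x \<Rightarrow> real) \<Rightarrow> 'x \<Rightarrow> real" where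
  "bellman_error f \<mu> Uf c h x = (INF u \<in> Uf x. c x u + gen f \<mu> u h x)"

definition myopic :: "('x::plus \<Rightarrow> 'u \<Rightarrow> 'w \<Rightarrow> 'x) \<Rightarrow> 'w measure \<Rightarrow> 'x set \<Rightarrow> ('x \<Rightarrow> 'u set)
    \<Rightarrow> ('x \<Rightarrow> 'u \<Rightarrow> real) \<Rightarrow> ('x \<Rightarrow> real) \<Rightarrow> ('x \<Rightarrow> 'u) \<Rightarrow> bool" where
  "myopic f \<mu> Xs Uf c g \<phi> \<longleftrightarrow>
     (\<forall>x\<in>Xs. \<phi> x \<in> Uf x \<and>
        (\<forall>u\<in>Uf x. c x (\<phi> x) + gen f \<mu> (\<phi> x) g x \<le> c x u + gen f \<mu> u g x))"

definition avg_cost :: "('x::plus \<Rightarrow> 'u \<Rightarrow> 'w \<Rightarrow> 'x) \<Rightarrow> 'w measure \<Rightarrow> ('x \<Rightarrow> 'u \<Rightarrow> real)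
    \<Rightarrow> 'x \<Rightarrow> (nat \<Rightarrow> (nat \<Rightarrow> 'w) \<Rightarrow> 'u) \<Rightarrow> ereal" where
  "avg_cost f \<mu> c x U = limsup (\<lambda>n::nat. ereal (1 / real n) *
      (\<Sum>t<n. enn2ereal (\<integral>\<^sup>+ \<omega>. ennreal (c (traj f x U t \<omega>) (U t \<omega>)) \<partial>noise_space \<mu>)))"

text \<open>Return time \<open>\<tau>_{x\<degree>} = min{t \<ge> 1 : X(t) = x\<degree>}\<close> (only meaningful on paths that return).\<close>
definition returns :: "('x::plus \<Rightarrow> 'u \<Rightarrow> 'w \<Rightarrow> 'x) \<Rightarrow> 'x \<Rightarrow> 'x \<Rightarrow> (nat \<Rightarrow> (nat \<Rightarrow> 'w) \<Rightarrow> 'u)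
    \<Rightarrow> (nat \<Rightarrow> 'w) \<Rightarrow> bool" where
  "returns f x xo U \<omega> \<longleftrightarrow> (\<exists>t\<ge>1. traj f x U t \<omega> = xo)"

definition hit_time :: "('x::plus \<Rightarrow> 'u \<Rightarrow> 'w \<Rightarrow> 'x) \<Rightarrow> 'x \<Rightarrow> 'x \<Rightarrow> (nat \<Rightarrow> (nat \<Rightarrow> 'w) \<Rightarrow> 'u)
    \<Rightarrow> (nat \<Rightarrow> 'w) \<Rightarrow> nat" where
  "hit_time f x xo U \<omega> = (LEAST t. 1 \<le> t \<and> traj f x U t \<omega> = xo)"

definition ssp_sum :: "('x::plus \<Rightarrow> 'u \<Rightarrow> 'w \<Rightarrow> 'x) \<Rightarrow> 'x \<Rightarrow> 'x \<Rightarrow> (nat \<Rightarrow> (nat \<Rightarrow> 'w) \<Rightarrow> 'u)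
    \<Rightarrow> ('x \<Rightarrow> 'u \<Rightarrow> real) \<Rightarrow> (nat \<Rightarrow> 'w) \<Rightarrow> real" where
  "ssp_sum f x xo U g \<omega> = (\<Sum>t < hit_time f x xo U \<omega>. g (traj f x U t \<omega>) (U t \<omega>))"

definition ssp_ok :: "('x::plus \<Rightarrow> 'u::topological_space \<Rightarrow> 'w \<Rightarrow> 'x) \<Rightarrow> 'w measure \<Rightarrow> ('x \<Rightarrow> 'u set)
    \<Rightarrow> 'x \<Rightarrow> 'x \<Rightarrow> ('x \<Rightarrow> 'u \<Rightarrow> real) \<Rightarrow> (nat \<Rightarrow> (nat \<Rightarrow> 'w) \<Rightarrow> 'u) \<Rightarrow> bool" where
  "ssp_ok f \<mu> Uf x xo g U \<longleftrightarrow> admissible f \<mu> Uf x U \<and>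
     (AE \<omega> in noise_space \<mu>. returns f x xo U \<omega>) \<and>
     integrable (noise_space \<mu>) (ssp_sum f x xo U g)"

definition ssp_exp :: "('x::plus \<Rightarrow> 'u \<Rightarrow> 'w \<Rightarrow> 'x) \<Rightarrow> 'w measure \<Rightarrow> 'x \<Rightarrow> 'x
    \<Rightarrow> ('x \<Rightarrow> 'u \<Rightarrow> real) \<Rightarrow> (nat \<Rightarrow> (nat \<Rightarrow> 'w) \<Rightarrow> 'u) \<Rightarrow> real" where
  "ssp_exp f \<mu> x xo g U = (\<integral>\<omega>. ssp_sum f x xo U g \<omega> \<partial>noise_space \<mu>)"

definition ssp_rep :: "('x::plus \<Rightarrow> 'u::topological_space \<Rightarrow> 'w \<Rightarrow> 'x) \<Rightarrow> 'w measure \<Rightarrow> 'x set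
    \<Rightarrow> ('x \<Rightarrow> 'u set) \<Rightarrow> 'x \<Rightarrow> ('x \<Rightarrow> 'u \<Rightarrow> real) \<Rightarrow> ('x \<Rightarrow> real) \<Rightarrow> ('x \<Rightarrow> 'u) \<Rightarrow> bool" where
  "ssp_rep f \<mu> Xs Uf xo g v \<phi> \<longleftrightarrow>
     (\<forall>x\<in>Xs. ssp_ok f \<mu> Uf x xo g (stat_input f x \<phi>) \<and>
        v x = ssp_exp f \<mu> x xo g (stat_input f x \<phi>) \<and>
        (\<forall>U. ssp_ok f \<mu> Uf x xo g U \<longrightarrow> v x \<le> ssp_exp f \<mu> x xo g U))"

end

theory Submission
  imports Defs
begin

text \<open>The SSP cost functions of \<open>h\<^sup>*\<close> and \<open>h\<close> differ exactly by \<open>\<E>\<^sub>B - \<eta>\<^sup>*\<close>.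
  Feeding the optimal policy of one SSP problem into the other, whose value it can only
  overestimate, and splitting the random sum by linearity gives the two bounds on
  \<open>h\<^sup>* - h\<close>. Only the two SSP representations and the integrability of the error sums
  are used.\<close>

lemma ssp_sum_add:
  "ssp_sum f x xo U (\<lambda>y u. g y u + d y u) \<omega> = ssp_sum f x xo U g \<omega> + ssp_sum f x xo U d \<omega>"
  unfolding ssp_sum_def by (simp add: sum.distrib)

lemma ssp_sum_uminus:
  "ssp_sum f x xo U (\<lambda>y u. - g y u) \<omega> = - ssp_sum f x xo U g \<omega>"
  unfolding ssp_sum_def by (simp add: sum_negf)

lemma ssp_exp_uminus:
  "ssp_exp f \<mu> x xo (\<lambda>y u. - g y u) U = - ssp_exp f \<mu> x xo g U"
  unfolding ssp_exp_def ssp_sum_uminus by simp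

lemma ssp_ok_add:
  assumes "ssp_ok f \<mu> Uf x xo g U" "integrable (noise_space \<mu>) (ssp_sum f x xo U d)"
  shows "ssp_ok f \<mu> Uf x xo (\<lambda>y u. g y u + d y u) U"
  using assms unfolding ssp_ok_def ssp_sum_add by auto

lemma ssp_exp_add:
  assumes "ssp_ok f \<mu> Uf x xo g U" "integrable (noise_space \<mu>) (ssp_sum f x xo U d)"
  shows "ssp_exp f \<mu> x xo (\<lambda>y u. g y u + d y u) U = ssp_exp f \<mu> x xo g U + ssp_exp f \<mu> x xo d U"
  using assms unfolding ssp_ok_def ssp_exp_def ssp_sum_add by simp

lemma ssp_rep_le_add_ssp_exp:
  assumes v: "ssp_rep f \<mu> Xs Uf xo g v \<phi>"
    and w: "ssp_rep f \<mu> Xs Uf xo g' w \<psi>"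
    and g': "\<And>y u. g' y u = g y u + d y u"
    and x: "x \<in> Xs"
    and d_int: "integrable (noise_space \<mu>) (ssp_sum f x xo (stat_input f x \<phi>) d)"
  shows "w x \<le> v x + ssp_exp f \<mu> x xo d (stat_input f x \<phi>)"
proof -
  let ?U = "stat_input f x \<phi>"
  have g'_eq: "g' = (\<lambda>y u. g y u + d y u)" using g' by blast
  have ok: "ssp_ok f \<mu> Uf x xo g ?U" and v_x: "v x = ssp_exp f \<mu> x xo g ?U"
    using v x unfolding ssp_rep_def by blast+
  have "w x \<le> ssp_exp f \<mu> x xo g' ?U"
    using w x ssp_ok_add[OF ok d_int] unfolding ssp_rep_def g'_eq by blast
  also have "\<dots> = v x + ssp_exp f \<mu> x xo d ?U"
    unfolding g'_eq v_x using ssp_exp_add[OF ok d_int] .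
  finally show ?thesis .
qed

theorem proposition2:
  fixes f :: "'x::euclidean_space \<Rightarrow> 'u::euclidean_space \<Rightarrow> 'w::euclidean_space \<Rightarrow> 'x"
    and \<mu> :: "'w measure" and Xs :: "'x set" and Uf :: "'x \<Rightarrow> 'u set"
    and c :: "'x \<Rightarrow> 'u \<Rightarrow> real"
    and xo :: 'x and hstar h :: "'x \<Rightarrow> real" and etastar eta :: real
    and phistar phih :: "'x \<Rightarrow> 'u"
  assumes W: "prob_space \<mu>" "sets \<mu> = sets borel"
    and f_meas: "(\<lambda>(x, u, w). f x u w) \<in> borel_measurable borel"
    and closed: "\<And>x u. x \<in> Xs \<Longrightarrow> u \<in> Uf x \<Longrightarrow> AE w in \<mu>. x + f x u w \<in> Xs"
    and c_meas: "(\<lambda>(x, u). c x u) \<in> borel_measurable borel"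
    and c_nonneg: "\<And>x u. x \<in> Xs \<Longrightarrow> u \<in> Uf x \<Longrightarrow> 0 \<le> c x u"
    and xo: "xo \<in> Xs"
    and etastar_opt: "\<And>x. x \<in> Xs \<Longrightarrow>
          ereal etastar = (INF U \<in> {U. admissible f \<mu> Uf x U}. avg_cost f \<mu> c x U)"
    and hstar_meas: "hstar \<in> borel_measurable borel"
    and hstar_int: "\<And>x u. x \<in> Xs \<Longrightarrow> u \<in> Uf x \<Longrightarrow> integrable \<mu> (\<lambda>w. hstar (x + f x u w))"
    and ACOE: "\<And>x. x \<in> Xs \<Longrightarrow> bellman_error f \<mu> Uf c hstar x = etastar"
    and phistar_myopic: "myopic f \<mu> Xs Uf c hstar phistar"
    and hstar_ssp: "ssp_rep f \<mu> Xs Uf xo (\<lambda>x u. c x u - etastar) hstar phistar"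
    and h_meas: "h \<in> borel_measurable borel"
    and h_int: "\<And>x u. x \<in> Xs \<Longrightarrow> u \<in> Uf x \<Longrightarrow> integrable \<mu> (\<lambda>w. h (x + f x u w))"
    and eta: "0 \<le> eta"
    and phih_myopic: "myopic f \<mu> Xs Uf
          (\<lambda>x u. c x u - bellman_error f \<mu> Uf c h x + eta) h phih"
    and h_ssp: "ssp_rep f \<mu> Xs Uf xo
          (\<lambda>x u. (c x u - bellman_error f \<mu> Uf c h x + eta) - eta) h phih"
    and welldef_star: "\<And>x. x \<in> Xs \<Longrightarrow> integrable (noise_space \<mu>)
          (ssp_sum f x xo (stat_input f x phistar) (\<lambda>y u. bellman_error f \<mu> Uf c h y - etastar))"
    and welldef_h: "\<And>x. x \<in> Xs \<Longrightarrow> integrable (noise_space \<mu>)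
          (ssp_sum f x xo (stat_input f x phih) (\<lambda>y u. bellman_error f \<mu> Uf c h y - etastar))"
    and x: "x \<in> Xs"
  shows "ssp_exp f \<mu> x xo (\<lambda>y u. bellman_error f \<mu> Uf c h y - etastar) (stat_input f x phistar)
           \<le> hstar x - h x
       \<and> hstar x - h x
           \<le> ssp_exp f \<mu> x xo (\<lambda>y u. bellman_error f \<mu> Uf c h y - etastar) (stat_input f x phih)"
proof
  let ?err = "\<lambda>y u. bellman_error f \<mu> Uf c h y - etastar"
  have "h x \<le> hstar x + ssp_exp f \<mu> x xo (\<lambda>y u. - ?err y u) (stat_input f x phistar)"
  proof (rule ssp_rep_le_add_ssp_exp[OF hstar_ssp h_ssp _ x])
    show "integrable (noise_space \<mu>) (ssp_sum f x xo (stat_input f x phistar) (\<lambda>y u. - ?err y u))"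
      unfolding ssp_sum_uminus using welldef_star[OF x] by (rule integrable_minus)
  qed simp
  then show "ssp_exp f \<mu> x xo ?err (stat_input f x phistar) \<le> hstar x - h x"
    unfolding ssp_exp_uminus by simp
  have "hstar x \<le> h x + ssp_exp f \<mu> x xo ?err (stat_input f x phih)"
    by (rule ssp_rep_le_add_ssp_exp[OF h_ssp hstar_ssp _ x welldef_h[OF x]]) simp
  then show "hstar x - h x \<le> ssp_exp f \<mu> x xo ?err (stat_input f x phih)"
    by simp
qed

end
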